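(* Let $\alpha\in(0,1)$. For every probability distribution $P$ on the Cantor space $\Omega=\{0,1\}^{\mathbb{N}}$ there exist sets $A_1,A_2,\dots$ of binary strings such that (1) for each $n$, $A_n$ consists of binary strings of length $n$ and $|A_n|\le 2^{\alpha n}$; (2) for $P$-almost every sequence $\omega\in\Omega$, there are infinitely many $i$ such that $\omega$ has a substring belonging to $A_i$.
   Context: A substring of an infinite binary sequence $\omega=\omega_0\omega_1\dots$ is a finite block $\omega_k\omega_{k+1}\dots\omega_{k+\ell-1}$ of consecutive bits. $P$ is a probability measure on the Borel sets of the Cantor space. *)

theory Defs
  imports "HOL-Probability.Probability"
begin

definition has_substring :: "(nat \<Rightarrow> bool) \<Rightarrow> bool list \<Rightarrow> bool" where
  "has_substring \<omega> s \<longleftrightarrow> (\<exists>k. map (\<lambda>j. \<omega> (k + j)) [0..<length s] = s)"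

end

theory Submission
  imports Defs
begin

text \<open>Cut a prefix of \<open>\<omega>\<close> into aligned blocks of lengths \<open>L 0 < L 1 < \<dots>\<close>, where
  \<open>L (i + 1) = K i * L i\<close>. Each block of length \<open>L (i + 1)\<close> is a concatenation of \<open>K i\<close> blocks
  of length \<open>L i\<close>; if at every level fewer than a fraction \<open>\<lambda> / m i\<close> of these concatenations
  occurred, the number of distinct blocks would drop below one after \<open>r > 2 / \<alpha>\<close> levels, so
  some level is rich. On a rich level, \<open>m i\<close> random concatenations, drawn for each of the at
  most \<open>2 ^ 2 ^ L i\<close> possible sets of \<open>L i\<close>-blocks, all miss the occurring blocks with
  probability at most \<open>exp (- \<lambda>)\<close>; averaging over \<open>P\<close> fixes one choice of at most
  \<open>2 ^ 2 ^ L i * m i \<le> 2 powr (\<alpha> * L (i + 1))\<close> words that is missed only with \<open>P\<close>-probability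
  \<open>exp (- \<lambda>)\<close>. So above any length there are finitely many sparse sets hit outside an event of
  probability \<open>\<epsilon>\<close>; gluing such stages with \<open>\<epsilon> = 2 ^ - j\<close> over disjoint ranges of lengths,
  Borel--Cantelli gives infinitely many hits almost surely.\<close>

definition prefix_bits :: "(nat \<Rightarrow> bool) \<Rightarrow> nat \<Rightarrow> bool list" where
  "prefix_bits \<omega> N = map \<omega> [0..<N]"

definition blocks :: "nat \<Rightarrow> bool list \<Rightarrow> bool list set" where
  "blocks l p = {take l (drop (j * l) p) | j. j < length p div l}"

definition concats :: "nat \<Rightarrow> bool list set \<Rightarrow> bool list set" where
  "concats k F = concat ` {ws. set ws \<subseteq> F \<and> length ws = k}"

lemma length_prefix_bits [simp]: "length (prefix_bits \<omega> N) = N"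
  by (simp add: prefix_bits_def)

lemma card_bool_lists_length: "card {s :: bool list. length s = l} = 2 ^ l"
  using card_lists_length_eq[of "UNIV :: bool set" l] by simp

lemma finite_bool_lists_length: "finite {s :: bool list. length s = l}"
  using finite_lists_length_eq[of "UNIV :: bool set" l] by simp

lemma mult_add_le_of_less_div:
  fixes j n l :: nat
  assumes "j < n div l"
  shows "j * l + l \<le> n"
proof -
  have "Suc j * l \<le> n div l * l"
    using assms by (intro mult_right_mono) auto
  also have "\<dots> \<le> n"
    by (rule div_times_less_eq_dividend)
  finally show ?thesis
    by simp
qed

lemma blocks_subset_lists_length: "blocks l p \<subseteq> {s. length s = l}"
  using mult_add_le_of_less_div by (fastforce simp: blocks_def)

lemma finite_blocks: "finite (blocks l p)"
  unfolding blocks_def by simp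

lemma blocks_nonempty:
  assumes "0 < l" "l \<le> length p"
  shows "blocks l p \<noteq> {}"
proof -
  have "0 < length p div l"
    using assms by (simp add: div_greater_zero_iff)
  then show ?thesis
    unfolding blocks_def by blast
qed

lemma card_blocks_le: "card (blocks l p) \<le> 2 ^ l"
  by (metis card_mono card_bool_lists_length finite_bool_lists_length blocks_subset_lists_length)

lemma has_substring_if_in_blocks_prefix_bits:
  assumes "s \<in> blocks l (prefix_bits \<omega> N)"
  shows "has_substring \<omega> s"
proof -
  obtain j where j: "j < N div l" and s: "s = take l (drop (j * l) (prefix_bits \<omega> N))"
    using assms unfolding blocks_def by auto
  have "j * l + l \<le> N"
    using mult_add_le_of_less_div[OF j] .
  then have "map (\<lambda>t. \<omega> (j * l + t)) [0..<length s] = s"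
    using s by (intro nth_equalityI) (simp_all add: prefix_bits_def)
  then show ?thesis
    unfolding has_substring_def by blast
qed

lemma take_mult_drop_eq_concat:
  "a + m * l \<le> length p \<Longrightarrow>
   take (m * l) (drop a p) = concat (map (\<lambda>t. take l (drop (a + t * l) p)) [0..<m])"
proof (induction m)
  case 0
  then show ?case by simp
next
  case (Suc m)
  have "take (Suc m * l) (drop a p) = take (m * l) (drop a p) @ take l (drop (m * l) (drop a p))"
    by (metis add.commute mult_Suc take_add)
  then show ?case
    using Suc by (simp add: add.commute)
qed

lemma length_concat_lists_length:
  "set ws \<subseteq> {s. length s = l} \<Longrightarrow> length (concat ws) = length ws * l"
  by (induction ws) auto

lemma concats_subset_lists_length:
  assumes "F \<subseteq> {s. length s = l}"
  shows "concats k F \<subseteq> {s. length s = k * l}"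
  unfolding concats_def
proof (rule image_subsetI)
  fix ws assume "ws \<in> {ws. set ws \<subseteq> F \<and> length ws = k}"
  then show "concat ws \<in> {s. length s = k * l}"
    using assms length_concat_lists_length[of ws l] by auto
qed

lemma finite_concats: "finite F \<Longrightarrow> finite (concats k F)"
  unfolding concats_def by (intro finite_imageI finite_lists_length_eq)

lemma card_concats_le:
  assumes "finite F"
  shows "card (concats k F) \<le> card F ^ k"
proof -
  have "card (concats k F) \<le> card {ws. set ws \<subseteq> F \<and> length ws = k}"
    unfolding concats_def using assms by (intro card_image_le finite_lists_length_eq)
  then show ?thesis
    using card_lists_length_eq[OF assms] by simp
qed

lemma concats_nonempty:
  assumes "x \<in> F"
  shows "concats k F \<noteq> {}"
proof -
  have "concat (replicate k x) \<in> concats k F"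
    using assms unfolding concats_def by (intro imageI) auto
  then show ?thesis
    by blast
qed

lemma blocks_subset_concats:
  assumes "0 < l"
  shows "blocks (k * l) p \<subseteq> concats k (blocks l p)"
proof
  fix s assume "s \<in> blocks (k * l) p"
  then obtain j where j: "j < length p div (k * l)" and s: "s = take (k * l) (drop (j * (k * l)) p)"
    unfolding blocks_def by blast
  have end_le: "j * (k * l) + k * l \<le> length p"
    using mult_add_le_of_less_div[OF j] .
  have s_eq: "s = concat (map (\<lambda>t. take l (drop ((j * k + t) * l) p)) [0..<k])"
    using s take_mult_drop_eq_concat[of "j * (k * l)" k l p] end_le
    by (simp add: algebra_simps)
  have "take l (drop ((j * k + t) * l) p) \<in> blocks l p" if "t < k" for t
  proof -
    have "(t + 1) * l \<le> k * l"
      using that by (intro mult_right_mono) auto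
    then have "(j * k + t) * l + l \<le> j * (k * l) + k * l"
      by (simp add: algebra_simps)
    then have "Suc (j * k + t) \<le> length p div l"
      using end_le assms by (subst less_eq_div_iff_mult_less_eq) auto
    then show ?thesis
      unfolding blocks_def by auto
  qed
  then show "s \<in> concats k (blocks l p)"
    unfolding concats_def s_eq by (intro image_eqI[OF refl]) auto
qed

lemma cylinder_sets_borel: "{\<omega> :: nat \<Rightarrow> bool. \<forall>j<n. \<omega> j = f j} \<in> sets borel"
proof (induction n)
  case 0
  then show ?case by simp
next
  case (Suc n)
  have "(\<lambda>\<omega> :: nat \<Rightarrow> bool. \<omega> n) \<in> borel_measurable borel"
    by (rule borel_measurable_continuous_onI) simp
  then have "{\<omega> :: nat \<Rightarrow> bool. \<omega> n = f n} \<in> sets borel"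
    using measurable_sets[of _ borel borel "{f n}"] by (simp add: open_discrete vimage_def)
  moreover have "{\<omega> :: nat \<Rightarrow> bool. \<forall>j<Suc n. \<omega> j = f j} = {\<omega>. \<forall>j<n. \<omega> j = f j} \<inter> {\<omega>. \<omega> n = f n}"
    by (auto simp: less_Suc_eq)
  ultimately show ?case
    using Suc by simp
qed

lemma prefix_bits_event_sets_borel: "{\<omega>. \<Phi> (prefix_bits \<omega> N)} \<in> sets borel"
proof -
  have "{\<omega>. \<Phi> (prefix_bits \<omega> N)} = (\<Union>xs\<in>{xs. length xs = N \<and> \<Phi> xs}. {\<omega>. \<forall>j<N. \<omega> j = xs ! j})"
  proof safe
    fix \<omega> assume "\<Phi> (prefix_bits \<omega> N)"
    then show "\<omega> \<in> (\<Union>xs\<in>{xs. length xs = N \<and> \<Phi> xs}. {\<omega>. \<forall>j<N. \<omega> j = xs ! j})"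
      by (intro UN_I[of "prefix_bits \<omega> N"]) (auto simp: prefix_bits_def)
  next
    fix \<omega> xs assume "\<Phi> xs" "\<forall>j<length xs. \<omega> j = xs ! j"
    moreover from this have "prefix_bits \<omega> (length xs) = xs"
      by (intro nth_equalityI) (auto simp: prefix_bits_def)
    ultimately show "\<Phi> (prefix_bits \<omega> (length xs))"
      by simp
  qed
  moreover have "finite {xs :: bool list. length xs = N \<and> \<Phi> xs}"
    by (rule finite_subset[OF _ finite_bool_lists_length[of N]]) auto
  ultimately show ?thesis
    using cylinder_sets_borel by auto
qed

lemma diff_power_le_exp_mult_power:
  fixes c s lam :: real
  assumes "0 \<le> s" "s \<le> c" "0 < c" "lam * c \<le> real M * s"
  shows "(c - s) ^ M \<le> exp (- lam) * c ^ M"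
proof -
  define x where "x = s / c"
  have "(c - s) ^ M = c ^ M * (1 - x) ^ M"
    using assms by (simp add: x_def field_simps flip: power_mult_distrib)
  also have "(1 - x) ^ M \<le> exp (- x) ^ M"
    using assms exp_ge_add_one_self[of "-x"] by (intro power_mono) (auto simp: x_def)
  also have "\<dots> = exp (- (real M * x))"
    by (simp flip: exp_of_nat_mult)
  also have "\<dots> \<le> exp (- lam)"
    using assms by (simp add: x_def field_simps)
  finally show ?thesis
    using assms by (simp add: mult.commute mult_left_mono)
qed

lemma card_PiE_component_in_le:
  assumes "finite I" "i \<in> I" "\<And>j. j \<in> I \<Longrightarrow> finite (B j)"
    and "X \<subseteq> B i" "real (card X) \<le> \<delta> * real (card (B i))"
  shows "real (card {c \<in> PiE I B. c i \<in> X}) \<le> \<delta> * real (card (PiE I B))"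
proof -
  define R where "R = (\<Prod>j\<in>I - {i}. real (card (B j)))"
  have "{c \<in> PiE I B. c i \<in> X} = PiE I (B(i := X))"
    using assms(2,4) unfolding PiE_def Pi_def extensional_def by (auto split: if_splits)
  then have "real (card {c \<in> PiE I B. c i \<in> X}) = real (card X) * R"
    using assms(1,2) by (simp add: card_PiE prod.remove R_def)
  also have "\<dots> \<le> \<delta> * real (card (B i)) * R"
    using assms(5) by (rule mult_right_mono) (simp add: R_def prod_nonneg)
  also have "\<dots> = \<delta> * real (card (PiE I B))"
    using assms(1,2) by (simp add: card_PiE prod.remove R_def)
  finally show ?thesis .
qed

lemma card_tuples_avoiding_le:
  assumes "finite D" "D \<noteq> {}" "S \<subseteq> D" "lam * real (card D) \<le> real M * real (card S)"
  shows "real (card (PiE {..<M} (\<lambda>_. D - S))) \<le> exp (- lam) * real (card (PiE {..<M} (\<lambda>_. D)))"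
proof -
  have "card S \<le> card D"
    using assms by (intro card_mono)
  moreover have "0 < card D"
    using assms by (simp add: card_gt_0_iff)
  ultimately have "(real (card D) - real (card S)) ^ M \<le> exp (- lam) * real (card D) ^ M"
    using assms(4) by (intro diff_power_le_exp_mult_power) auto
  then show ?thesis
    using assms \<open>card S \<le> card D\<close> by (simp add: card_PiE card_Diff_subset finite_subset)
qed

lemma (in prob_space) exists_prob_le_of_card_le:
  assumes "finite C" "C \<noteq> {}" "\<And>c. c \<in> C \<Longrightarrow> E c \<in> events"
    and "\<And>x. real (card {c \<in> C. x \<in> E c}) \<le> \<delta> * real (card C)"
  shows "\<exists>c\<in>C. prob (E c) \<le> \<delta>"
proof (rule ccontr)
  assume "\<not> ?thesis"
  then have "(\<Sum>c\<in>C. \<delta>) < (\<Sum>c\<in>C. prob (E c))"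
    using assms(1,2) by (intro sum_strict_mono) auto
  then have "\<delta> * real (card C) < (\<Sum>c\<in>C. prob (E c))"
    by (simp add: mult.commute)
  also have "\<dots> = (\<Sum>c\<in>C. expectation (indicator (E c)))"
    using assms(3) by (simp add: emeasure_eq_measure)
  also have "\<dots> = expectation (\<lambda>x. \<Sum>c\<in>C. indicator (E c) x)"
    using assms(3)
    by (intro Bochner_Integration.integral_sum[symmetric] integrable_real_indicator)
       (auto simp: emeasure_eq_measure)
  also have "\<dots> \<le> expectation (\<lambda>x. \<delta> * real (card C))"
  proof (rule integral_mono)
    show "integrable M (\<lambda>x. \<Sum>c\<in>C. indicator (E c) x :: real)"
      using assms(3)
      by (intro Bochner_Integration.integrable_sum integrable_real_indicator)
         (auto simp: emeasure_eq_measure)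
    fix x
    have "(\<Sum>c\<in>C. indicator (E c) x :: real) = real (card {c \<in> C. x \<in> E c})"
      using assms(1) by (simp add: indicator_def sum.If_cases Int_def)
    then show "(\<Sum>c\<in>C. indicator (E c) x :: real) \<le> \<delta> * real (card C)"
      using assms(4)[of x] by simp
  qed simp
  finally show False
    by (simp add: prob_space)
qed

definition block_rich :: "real \<Rightarrow> nat \<Rightarrow> nat \<Rightarrow> nat \<Rightarrow> bool list \<Rightarrow> bool" where
  "block_rich lam m k l p \<longleftrightarrow>
     lam * real (card (concats k (blocks l p))) \<le> real m * real (card (blocks (k * l) p))"

text \<open>A sampling picks, for every possible set \<open>F\<close> of \<open>l\<close>-blocks, \<open>m\<close> of the \<open>k\<close>-fold
  concatenations of words of \<open>F\<close>; counting samplings replaces drawing them at random.\<close>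
definition nonempty_word_sets :: "nat \<Rightarrow> bool list set set" where
  "nonempty_word_sets l = {F. F \<subseteq> {s. length s = l} \<and> F \<noteq> {}}"

definition samplings :: "nat \<Rightarrow> nat \<Rightarrow> nat \<Rightarrow> (bool list set \<Rightarrow> nat \<Rightarrow> bool list) set" where
  "samplings k l m = PiE (nonempty_word_sets l) (\<lambda>F. PiE {..<m} (\<lambda>_. concats k F))"

definition sampled_words :: "nat \<Rightarrow> nat \<Rightarrow> (bool list set \<Rightarrow> nat \<Rightarrow> bool list) \<Rightarrow> bool list set" where
  "sampled_words l m c = (\<Union>F\<in>nonempty_word_sets l. c F ` {..<m})"

lemma finite_nonempty_word_sets: "finite (nonempty_word_sets l)"
  unfolding nonempty_word_sets_def
  by (rule finite_subset[of _ "Pow {s. length s = l}"]) (auto simp: finite_bool_lists_length)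

lemma finite_if_in_nonempty_word_sets: "F \<in> nonempty_word_sets l \<Longrightarrow> finite F"
  unfolding nonempty_word_sets_def using finite_bool_lists_length finite_subset by blast

lemma card_nonempty_word_sets_le: "card (nonempty_word_sets l) \<le> 2 ^ 2 ^ l"
proof -
  have "card (nonempty_word_sets l) \<le> card (Pow {s :: bool list. length s = l})"
    unfolding nonempty_word_sets_def using finite_bool_lists_length by (intro card_mono) auto
  then show ?thesis
    by (simp add: card_Pow finite_bool_lists_length card_bool_lists_length)
qed

lemma finite_samplings: "finite (samplings k l m)"
  unfolding samplings_def using finite_nonempty_word_sets finite_if_in_nonempty_word_sets
  by (intro finite_PiE) (auto intro: finite_concats)

lemma samplings_nonempty: "samplings k l m \<noteq> {}"
  unfolding samplings_def nonempty_word_sets_def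
  by (force simp: PiE_eq_empty_iff dest: concats_nonempty)

lemma sampled_words_subset_lists_length:
  assumes "c \<in> samplings k l m"
  shows "sampled_words l m c \<subseteq> {s. length s = k * l}"
proof
  fix s assume "s \<in> sampled_words l m c"
  then obtain F i where F: "F \<in> nonempty_word_sets l" and "i < m" "s = c F i"
    unfolding sampled_words_def by blast
  then have "s \<in> concats k F"
    using assms unfolding samplings_def by (metis PiE_mem lessThan_iff)
  then show "s \<in> {s. length s = k * l}"
    using F concats_subset_lists_length unfolding nonempty_word_sets_def by blast
qed

lemma card_sampled_words_le: "card (sampled_words l m c) \<le> 2 ^ 2 ^ l * m"
proof -
  have "card (sampled_words l m c) \<le> (\<Sum>F\<in>nonempty_word_sets l. card (c F ` {..<m}))"
    unfolding sampled_words_def by (rule card_UN_le[OF finite_nonempty_word_sets])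
  also have "\<dots> \<le> (\<Sum>F\<in>nonempty_word_sets l. m)"
    by (intro sum_mono) (metis card_image_le card_lessThan finite_lessThan)
  also have "\<dots> \<le> 2 ^ 2 ^ l * m"
    using card_nonempty_word_sets_le by simp
  finally show ?thesis .
qed

lemma card_samplings_missing_rich_blocks_le:
  assumes "0 < l" "l \<le> length p" "block_rich lam m k l p"
  shows "real (card {c \<in> samplings k l m. sampled_words l m c \<inter> blocks (k * l) p = {}})
           \<le> exp (- lam) * real (card (samplings k l m))"
proof -
  define F where "F = blocks l p"
  define S where "S = blocks (k * l) p"
  have F: "F \<in> nonempty_word_sets l"
    unfolding F_def nonempty_word_sets_def using assms blocks_subset_lists_length blocks_nonempty by auto
  have "concats k F \<noteq> {}" "S \<subseteq> concats k F"
    using F concats_nonempty blocks_subset_concats[OF \<open>0 < l\<close>]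
    by (auto simp: nonempty_word_sets_def S_def F_def)
  then have "real (card (PiE {..<m} (\<lambda>_. concats k F - S)))
               \<le> exp (- lam) * real (card (PiE {..<m} (\<lambda>_. concats k F)))"
    using assms(3) finite_if_in_nonempty_word_sets[OF F] unfolding block_rich_def F_def S_def
    by (intro card_tuples_avoiding_le finite_concats)
  then have "real (card {c \<in> samplings k l m. c F \<in> PiE {..<m} (\<lambda>_. concats k F - S)})
               \<le> exp (- lam) * real (card (samplings k l m))"
    unfolding samplings_def using finite_nonempty_word_sets F finite_if_in_nonempty_word_sets
    by (intro card_PiE_component_in_le) (auto simp: PiE_iff intro!: finite_PiE finite_concats)
  moreover have "{c \<in> samplings k l m. sampled_words l m c \<inter> S = {}}
                   \<subseteq> {c \<in> samplings k l m. c F \<in> PiE {..<m} (\<lambda>_. concats k F - S)}"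
    using F unfolding samplings_def sampled_words_def by (auto simp: PiE_iff disjoint_iff) blast
  then have "card {c \<in> samplings k l m. sampled_words l m c \<inter> S = {}}
               \<le> card {c \<in> samplings k l m. c F \<in> PiE {..<m} (\<lambda>_. concats k F - S)}"
    using finite_samplings by (intro card_mono) auto
  ultimately show ?thesis
    unfolding S_def by linarith
qed

lemma exists_set_rarely_missing_rich_blocks:
  fixes P :: "(nat \<Rightarrow> bool) measure"
  assumes "prob_space P" and sets_P: "sets P = sets borel"
    and "0 < l" "0 < k" "k * l \<le> N"
  shows "\<exists>A \<subseteq> {s. length s = k * l}. card A \<le> 2 ^ 2 ^ l * m \<and>
           measure P {\<omega>. block_rich lam m k l (prefix_bits \<omega> N) \<and> A \<inter> blocks (k * l) (prefix_bits \<omega> N) = {}}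
             \<le> exp (- lam)"
proof -
  interpret prob_space P by fact
  define E where "E c = {\<omega>. block_rich lam m k l (prefix_bits \<omega> N) \<and>
                            sampled_words l m c \<inter> blocks (k * l) (prefix_bits \<omega> N) = {}}" for c
  have "l \<le> N"
    using \<open>0 < k\<close> \<open>k * l \<le> N\<close> le_trans[of l "k * l" N] by simp
  have "real (card {c \<in> samplings k l m. \<omega> \<in> E c}) \<le> exp (- lam) * real (card (samplings k l m))" for \<omega>
    using card_samplings_missing_rich_blocks_le[OF \<open>0 < l\<close>, of "prefix_bits \<omega> N"] \<open>l \<le> N\<close>
    by (cases "block_rich lam m k l (prefix_bits \<omega> N)") (simp_all add: E_def)
  moreover have "E c \<in> events" for c
    unfolding E_def using sets_P prefix_bits_event_sets_borel by simp
  ultimately obtain c where "c \<in> samplings k l m" "prob (E c) \<le> exp (- lam)"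
    using exists_prob_le_of_card_le[OF finite_samplings samplings_nonempty] by blast
  then show ?thesis
    using sampled_words_subset_lists_length[of c] card_sampled_words_le[of l m c] unfolding E_def
    by (intro exI[of _ "sampled_words l m c"]) auto
qed

lemma iterated_decay_bound:
  fixes b :: "nat \<Rightarrow> real" and L K :: "nat \<Rightarrow> nat" and \<alpha> :: real
  assumes "b 0 \<le> 2 ^ L 0" "\<And>i. 0 \<le> b i" "\<And>i. L (Suc i) = K i * L i"
    and "\<And>i. i < r \<Longrightarrow> b (Suc i) \<le> b i ^ K i * 2 powr (- (\<alpha> * L (Suc i) / 2))"
  shows "i \<le> r \<Longrightarrow> b i \<le> 2 powr (L i * (1 - i * \<alpha> / 2))"
proof (induction i)
  case 0
  then show ?case
    using assms(1) by (simp add: powr_realpow)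
next
  case (Suc i)
  have "b (Suc i) \<le> b i ^ K i * 2 powr (- (\<alpha> * L (Suc i) / 2))"
    using assms(4) Suc by simp
  also have "\<dots> \<le> (2 powr (L i * (1 - i * \<alpha> / 2))) ^ K i * 2 powr (- (\<alpha> * L (Suc i) / 2))"
    using Suc assms(2) by (intro mult_right_mono power_mono) auto
  also have "\<dots> = 2 powr (K i * (L i * (1 - i * \<alpha> / 2))) * 2 powr (- (\<alpha> * L (Suc i) / 2))"
    by (simp only: powr_power)
  also have "\<dots> = 2 powr (K i * (L i * (1 - i * \<alpha> / 2)) + - (\<alpha> * L (Suc i) / 2))"
    by (rule powr_add[symmetric])
  also have "K i * (L i * (1 - i * \<alpha> / 2)) + - (\<alpha> * L (Suc i) / 2) = L (Suc i) * (1 - Suc i * \<alpha> / 2)"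
    by (simp add: assms(3) algebra_simps)
  finally show ?case .
qed

lemma exists_block_rich_level:
  fixes L K m :: "nat \<Rightarrow> nat"
  assumes "0 < \<alpha>" "2 < real r * \<alpha>" "\<And>i. 0 < L i" "\<And>i. L (Suc i) = K i * L i"
    and "L r \<le> length p" "0 \<le> lam" "\<And>i. lam * 2 powr (\<alpha> * L (Suc i) / 2) \<le> real (m i)"
  shows "\<exists>i<r. block_rich lam (m i) (K i) (L i) p"
proof (rule ccontr)
  assume none_rich: "\<not> ?thesis"
  define b where "b i = real (card (blocks (L i) p))" for i
  have "b (Suc i) \<le> b i ^ K i * 2 powr (- (\<alpha> * L (Suc i) / 2))" if "i < r" for i
  proof -
    define q where "q = 2 powr (- (\<alpha> * L (Suc i) / 2))"
    have "real (m i) * b (Suc i) < lam * real (card (concats (K i) (blocks (L i) p)))"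
      using none_rich that by (auto simp: block_rich_def b_def assms(4))
    also have "\<dots> \<le> lam * b i ^ K i"
      using card_concats_le[OF finite_blocks, of "K i" "L i" p] \<open>0 \<le> lam\<close>
      by (intro mult_left_mono) (simp_all add: b_def flip: of_nat_power)
    also have "lam = lam * 2 powr (\<alpha> * L (Suc i) / 2) * q"
      by (simp add: q_def powr_minus)
    also have "\<dots> \<le> real (m i) * q"
      using assms(7) by (intro mult_right_mono) (auto simp: q_def)
    finally have "real (m i) * b (Suc i) < real (m i) * (b i ^ K i * q)"
      using \<open>0 \<le> lam\<close> by (simp add: b_def mult_ac mult_right_mono)
    then show ?thesis
      unfolding q_def by (simp add: mult_less_cancel_left)
  qed
  then have "b r \<le> 2 powr (L r * (1 - r * \<alpha> / 2))"
    using card_blocks_le[of "L 0" p] assms(4)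
    by (intro iterated_decay_bound[of b L K r \<alpha>]) (simp_all add: b_def flip: of_nat_power)
  also have "\<dots> < 1"
    using assms(2,3) by (simp add: mult_pos_neg powr_less_one)
  finally show False
    using blocks_nonempty[of "L r" p] assms(3,5) finite_blocks
    by (simp add: b_def card_gt_0_iff)
qed

definition sparse_family :: "real \<Rightarrow> (nat \<Rightarrow> bool list set) \<Rightarrow> bool" where
  "sparse_family \<alpha> B \<longleftrightarrow> (\<forall>n. B n \<subseteq> {s. length s = n} \<and> real (card (B n)) \<le> 2 powr (\<alpha> * real n))"

definition covering_stage ::
    "(nat \<Rightarrow> bool) measure \<Rightarrow> real \<Rightarrow> nat \<Rightarrow> nat \<Rightarrow> real \<Rightarrow> (nat \<Rightarrow> bool list set) \<Rightarrow> (nat \<Rightarrow> bool) set \<Rightarrow> bool"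
  where "covering_stage P \<alpha> N0 N1 \<epsilon> B D \<longleftrightarrow>
    N0 < N1 \<and> sparse_family \<alpha> B \<and> (\<forall>n. B n \<noteq> {} \<longrightarrow> N0 < n \<and> n \<le> N1) \<and>
    D \<in> sets P \<and> measure P D \<le> \<epsilon> \<and> (\<forall>\<omega>. \<omega> \<notin> D \<longrightarrow> (\<exists>n. \<exists>s\<in>B n. has_substring \<omega> s))"

lemma exists_multiplier_powr_ge:
  fixes \<alpha> y :: real
  assumes "0 < \<alpha>" "0 < l" "0 < y"
  shows "\<exists>k\<ge>2. y \<le> 2 powr (\<alpha> * real (k * l) / 2)"
proof -
  define k where "k = nat \<lceil>2 * log 2 y / (\<alpha> * l)\<rceil> + 2"
  have "2 * log 2 y / (\<alpha> * l) \<le> real k"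
    unfolding k_def by linarith
  then have "log 2 y \<le> \<alpha> * real (k * l) / 2"
    using assms by (simp add: field_simps)
  then have "2 powr log 2 y \<le> 2 powr (\<alpha> * real (k * l) / 2)"
    by simp
  then show ?thesis
    using assms by (intro exI[of _ k]) (simp add: k_def)
qed

lemma exists_scales:
  fixes \<alpha> lam :: real
  assumes "0 < \<alpha>" "0 \<le> lam"
  shows "\<exists>L K m :: nat \<Rightarrow> nat. L 0 = N0 + 1 \<and> strict_mono L \<and> (\<forall>i. L (Suc i) = K i * L i) \<and>
           (\<forall>i. lam * 2 powr (\<alpha> * L (Suc i) / 2) \<le> real (m i)) \<and>
           (\<forall>i. real (2 ^ 2 ^ L i * m i) \<le> 2 powr (\<alpha> * L (Suc i)))"
proof -
  have "\<exists>k\<ge>2. (lam + 2) * 2 ^ 2 ^ l \<le> 2 powr (\<alpha> * real (k * l) / 2)" if "0 < l" for l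
    using assms that by (intro exists_multiplier_powr_ge) auto
  then obtain Kf where Kf: "\<And>l. 0 < l \<Longrightarrow> 2 \<le> Kf l \<and> (lam + 2) * 2 ^ 2 ^ l \<le> 2 powr (\<alpha> * real (Kf l * l) / 2)"
    by metis
  define L where "L = rec_nat (N0 + 1) (\<lambda>_ l. Kf l * l)"
  have L_Suc: "L (Suc i) = Kf (L i) * L i" for i
    by (simp add: L_def)
  have L_pos: "0 < L i" for i
  proof (induction i)
    case (Suc i)
    then show ?case
      using Kf[OF Suc] by (simp add: L_Suc)
  qed (simp add: L_def)
  have "L i < L (Suc i)" for i
    using Kf[OF L_pos[of i]] L_pos[of i] by (simp add: L_Suc)
  then have "strict_mono L"
    by (simp add: strict_mono_Suc_iff)
  define y where "y i = 2 powr (\<alpha> * L (Suc i) / 2)" for i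
  define m where "m i = nat \<lceil>lam * y i\<rceil> + 1" for i
  have y_ge_1: "1 \<le> y i" for i
    unfolding y_def using assms by (intro ge_one_powr_ge_zero) auto
  have m_ge: "lam * y i \<le> real (m i)" for i
    unfolding m_def by linarith
  have "real (2 ^ 2 ^ L i * m i) \<le> 2 powr (\<alpha> * L (Suc i))" for i
  proof -
    have "real (m i) \<le> (lam + 2) * y i"
      using assms y_ge_1[of i] unfolding m_def by (simp add: algebra_simps) linarith
    then have "real (2 ^ 2 ^ L i * m i) \<le> (lam + 2) * 2 ^ 2 ^ L i * y i"
      by (simp add: mult_left_mono mult_ac)
    also have "\<dots> \<le> y i * y i"
      using Kf[OF L_pos[of i]] y_ge_1[of i] unfolding y_def L_Suc by (intro mult_right_mono) auto
    also have "\<dots> = 2 powr (\<alpha> * L (Suc i))"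
      by (simp add: y_def flip: powr_add)
    finally show ?thesis .
  qed
  moreover have "L 0 = N0 + 1"
    by (simp add: L_def)
  ultimately show ?thesis
    using m_ge \<open>strict_mono L\<close> L_Suc unfolding y_def
    by (intro exI[of _ L] exI[of _ "\<lambda>i. Kf (L i)"] exI[of _ m]) auto
qed

lemma sparse_family_UN_levels:
  assumes "inj f" "\<And>i. i < r \<Longrightarrow> A i \<subseteq> {s. length s = f i} \<and> real (card (A i)) \<le> 2 powr (\<alpha> * f i)"
  shows "sparse_family \<alpha> (\<lambda>n. \<Union>i\<in>{i. i < r \<and> f i = n}. A i)"
  unfolding sparse_family_def
proof
  fix n
  show "(\<Union>i\<in>{i. i < r \<and> f i = n}. A i) \<subseteq> {s. length s = n} \<and>
        real (card (\<Union>i\<in>{i. i < r \<and> f i = n}. A i)) \<le> 2 powr (\<alpha> * n)"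
  proof (cases "\<exists>i<r. f i = n")
    case True
    then obtain i where "i < r" "f i = n"
      by blast
    moreover from this have "{i. i < r \<and> f i = n} = {i}"
      using injD[OF assms(1)] by blast
    ultimately show ?thesis
      using assms(2)[of i] by simp
  next
    case False
    then have "(\<Union>i\<in>{i. i < r \<and> f i = n}. A i) = {}"
      by blast
    then show ?thesis
      by simp
  qed
qed

lemma exists_sparse_stage_of_scales:
  fixes P :: "(nat \<Rightarrow> bool) measure" and L K m :: "nat \<Rightarrow> nat" and \<alpha> lam :: real
  assumes "prob_space P" "sets P = sets borel" "0 < \<alpha>" "2 < real r * \<alpha>"
    and "0 < L 0" "strict_mono L" "\<And>i. L (Suc i) = K i * L i" "0 \<le> lam"
    and "\<And>i. lam * 2 powr (\<alpha> * L (Suc i) / 2) \<le> real (m i)"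
    and "\<And>i. real (2 ^ 2 ^ L i * m i) \<le> 2 powr (\<alpha> * L (Suc i))"
  shows "\<exists>B D. covering_stage P \<alpha> (L 0) (L r) (real r * exp (- lam)) B D"
proof -
  interpret prob_space P by fact
  have L_pos: "0 < L i" for i
    using assms(5,6) strict_mono_less_eq[of L 0 i] by simp
  have K_pos: "0 < K i" for i
    using L_pos[of "Suc i"] assms(7) by simp
  have L_Suc_le: "L (Suc i) \<le> L r" if "i < r" for i
    using that assms(6) by (simp add: strict_mono_less_eq)
  define E where "E i A = {\<omega>. block_rich lam (m i) (K i) (L i) (prefix_bits \<omega> (L r)) \<and>
                            A \<inter> blocks (L (Suc i)) (prefix_bits \<omega> (L r)) = {}}" for i A
  have "\<exists>A \<subseteq> {s. length s = L (Suc i)}. card A \<le> 2 ^ 2 ^ L i * m i \<and> prob (E i A) \<le> exp (- lam)"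
    if "i < r" for i
    using exists_set_rarely_missing_rich_blocks[OF assms(1,2) L_pos K_pos,
        where N = "L r" and lam = lam and m = "m i"] L_Suc_le[OF that]
    unfolding E_def assms(7) by simp
  then obtain A where A: "\<And>i. i < r \<Longrightarrow> A i \<subseteq> {s. length s = L (Suc i)} \<and>
                          card (A i) \<le> 2 ^ 2 ^ L i * m i \<and> prob (E i (A i)) \<le> exp (- lam)"
    by metis
  define B where "B n = (\<Union>i\<in>{i. i < r \<and> L (Suc i) = n}. A i)" for n
  define D where "D = {\<omega>. \<forall>i<r. A i \<inter> blocks (L (Suc i)) (prefix_bits \<omega> (L r)) = {}}"
  have "real (card (A i)) \<le> 2 powr (\<alpha> * L (Suc i))" if "i < r" for i
    using A[OF that] assms(10)[of i] of_nat_le_iff[of "card (A i)" "2 ^ 2 ^ L i * m i"] by linarith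
  then have "sparse_family \<alpha> B"
    unfolding B_def using A strict_mono_eq[OF assms(6)]
    by (intro sparse_family_UN_levels) (auto simp: inj_def)
  moreover have "L 0 < L r"
    using assms(3,4,6) by (cases r) (auto simp: strict_mono_less)
  moreover have "\<forall>n. B n \<noteq> {} \<longrightarrow> L 0 < n \<and> n \<le> L r"
    using L_Suc_le assms(6) by (auto simp: B_def strict_mono_less)
  moreover have "D \<in> events"
    unfolding D_def using assms(2) prefix_bits_event_sets_borel by simp
  moreover have "prob D \<le> real r * exp (- lam)"
  proof -
    have "D \<subseteq> (\<Union>i<r. E i (A i))"
    proof
      fix \<omega> assume "\<omega> \<in> D"
      moreover obtain i where "i < r" "block_rich lam (m i) (K i) (L i) (prefix_bits \<omega> (L r))"
        using exists_block_rich_level[of \<alpha> r L K "prefix_bits \<omega> (L r)" lam m] assms L_pos by auto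
      ultimately show "\<omega> \<in> (\<Union>i<r. E i (A i))"
        by (auto simp: D_def E_def)
    qed
    moreover have E_events: "E i (A i) \<in> events" for i
      unfolding E_def using assms(2) prefix_bits_event_sets_borel by simp
    ultimately have "prob D \<le> prob (\<Union>i<r. E i (A i))"
      by (intro finite_measure_mono) auto
    also have "\<dots> \<le> (\<Sum>i<r. prob (E i (A i)))"
      using E_events by (intro finite_measure_subadditive_finite) auto
    also have "\<dots> \<le> (\<Sum>i<r. exp (- lam))"
      using A by (intro sum_mono) auto
    finally show ?thesis
      by simp
  qed
  moreover have "\<exists>n. \<exists>s\<in>B n. has_substring \<omega> s" if not_D: "\<omega> \<notin> D" for \<omega>
  proof -
    obtain i s where "i < r" "s \<in> A i" "s \<in> blocks (L (Suc i)) (prefix_bits \<omega> (L r))"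
      using not_D by (auto simp: D_def)
    then show ?thesis
      using has_substring_if_in_blocks_prefix_bits unfolding B_def by blast
  qed
  ultimately show ?thesis
    unfolding covering_stage_def by blast
qed

lemma exists_sparse_stage:
  fixes P :: "(nat \<Rightarrow> bool) measure" and \<alpha> \<epsilon> :: real
  assumes "prob_space P" "sets P = sets borel" "0 < \<alpha>" "0 < \<epsilon>"
  shows "\<exists>B N1 D. covering_stage P \<alpha> N0 N1 \<epsilon> B D"
proof -
  define r where "r = nat \<lceil>2 / \<alpha>\<rceil> + 1"
  define lam where "lam = \<bar>ln (real r / \<epsilon>)\<bar>"
  have "2 / \<alpha> < real r"
    unfolding r_def by linarith
  then have "2 < real r * \<alpha>"
    using assms(3) by (simp add: field_simps)
  have "exp (- lam) \<le> exp (- ln (real r / \<epsilon>))"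
    unfolding lam_def by simp
  also have "\<dots> = \<epsilon> / real r"
    using assms(4) by (simp add: r_def exp_minus)
  finally have "real r * exp (- lam) \<le> \<epsilon>"
    by (simp add: r_def field_simps)
  have "0 \<le> lam"
    by (simp add: lam_def)
  then obtain L K m where L: "L 0 = N0 + 1" "strict_mono L" "\<And>i. L (Suc i) = K i * L i"
    and m: "\<And>i. lam * 2 powr (\<alpha> * L (Suc i) / 2) \<le> real (m i)"
      "\<And>i. real (2 ^ 2 ^ L i * m i) \<le> 2 powr (\<alpha> * L (Suc i))"
    using exists_scales[OF assms(3)] by blast
  then obtain B D where "covering_stage P \<alpha> (L 0) (L r) (real r * exp (- lam)) B D"
    using exists_sparse_stage_of_scales[OF assms(1-3) \<open>2 < real r * \<alpha>\<close> _ L(2,3) \<open>0 \<le> lam\<close> m] by auto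
  then have "covering_stage P \<alpha> N0 (L r) \<epsilon> B D"
    using L(1) \<open>real r * exp (- lam) \<le> \<epsilon>\<close> unfolding covering_stage_def by auto
  then show ?thesis
    by blast
qed

lemma sparse_family_UN_of_separated_supports:
  assumes "strict_mono st" "\<And>j. sparse_family \<alpha> (B j)"
    and "\<And>j n. B j n \<noteq> {} \<Longrightarrow> st j < n \<and> n \<le> st (Suc j)"
  shows "sparse_family \<alpha> (\<lambda>n. \<Union>j. B j n)"
  unfolding sparse_family_def
proof
  fix n
  have unique: "j' = j" if "B j n \<noteq> {}" "B j' n \<noteq> {}" for j j'
  proof (rule ccontr)
    assume "j' \<noteq> j"
    then have "st (Suc (min j j')) \<le> st (max j j')"
      using assms(1) by (simp add: strict_mono_less_eq min_def max_def)
    then show False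
      using assms(3)[OF that(1)] assms(3)[OF that(2)] by (cases "j \<le> j'") (auto simp: min_def max_def)
  qed
  show "(\<Union>j. B j n) \<subseteq> {s. length s = n} \<and> real (card (\<Union>j. B j n)) \<le> 2 powr (\<alpha> * real n)"
  proof (cases "\<exists>j. B j n \<noteq> {}")
    case True
    then obtain j where "B j n \<noteq> {}"
      by blast
    then have "(\<Union>j. B j n) = B j n"
      using unique by blast
    then show ?thesis
      using assms(2)[of j] by (simp add: sparse_family_def)
  qed simp
qed

lemma exists_sparse_family_hit_infinitely_often:
  fixes P :: "(nat \<Rightarrow> bool) measure" and \<alpha> :: real
  assumes "prob_space P" and "\<And>N0 \<epsilon>. 0 < \<epsilon> \<Longrightarrow> \<exists>B N1 D. covering_stage P \<alpha> N0 N1 \<epsilon> B D"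
  shows "\<exists>A. sparse_family \<alpha> A \<and> (AE \<omega> in P. infinite {n. \<exists>s\<in>A n. has_substring \<omega> s})"
proof -
  interpret prob_space P by fact
  have "\<exists>B N1 D. covering_stage P \<alpha> N0 N1 ((1 / 2) ^ j) B D" for N0 j
    using assms(2) by simp
  then obtain Bf N1f Df where "\<And>N0 j. covering_stage P \<alpha> N0 (N1f N0 j) ((1 / 2) ^ j) (Bf N0 j) (Df N0 j)"
    by metis
  then have stage: "\<And>N0 j. N0 < N1f N0 j \<and> sparse_family \<alpha> (Bf N0 j) \<and>
      (\<forall>n. Bf N0 j n \<noteq> {} \<longrightarrow> N0 < n \<and> n \<le> N1f N0 j) \<and> Df N0 j \<in> events \<and>
      prob (Df N0 j) \<le> (1 / 2) ^ j \<and> (\<forall>\<omega>. \<omega> \<notin> Df N0 j \<longrightarrow> (\<exists>n. \<exists>s\<in>Bf N0 j n. has_substring \<omega> s))"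
    unfolding covering_stage_def by blast
  define st where "st = rec_nat 0 (\<lambda>j s. N1f s j)"
  define B where "B j = Bf (st j) j" for j
  define D where "D j = Df (st j) j" for j
  have st_Suc: "st (Suc j) = N1f (st j) j" for j
    by (simp add: st_def)
  have "strict_mono st"
    using stage by (simp add: strict_mono_Suc_iff st_Suc)
  have support: "st j < n \<and> n \<le> st (Suc j)" if "B j n \<noteq> {}" for j n
    using stage[of "st j" j] that unfolding B_def st_Suc by blast
  have "sparse_family \<alpha> (\<lambda>n. \<Union>j. B j n)"
    using stage unfolding B_def
    by (intro sparse_family_UN_of_separated_supports[OF \<open>strict_mono st\<close> _ support[unfolded B_def]]) auto
  moreover have "AE \<omega> in P. eventually (\<lambda>j. \<omega> \<in> space P - D j) sequentially"
  proof (rule borel_cantelli_AE1)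
    show "summable (\<lambda>j. prob (D j))"
      using stage unfolding D_def
      by (intro summable_comparison_test[OF _ summable_geometric[of "1 / 2"]]) auto
  qed (use stage in \<open>auto simp: D_def emeasure_eq_measure\<close>)
  then have "AE \<omega> in P. infinite {n. \<exists>s\<in>\<Union>j. B j n. has_substring \<omega> s}"
  proof (rule eventually_mono)
    fix \<omega> assume "eventually (\<lambda>j. \<omega> \<in> space P - D j) sequentially"
    then obtain J where J: "\<And>j. J \<le> j \<Longrightarrow> \<omega> \<in> space P - D j"
      unfolding eventually_sequentially by blast
    show "infinite {n. \<exists>s\<in>\<Union>j. B j n. has_substring \<omega> s}"
      unfolding infinite_nat_iff_unbounded_le
    proof
      fix k
      have "\<omega> \<notin> Df (st (max J k)) (max J k)"
        using J[of "max J k"] by (simp add: D_def)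
      then obtain n s where "s \<in> B (max J k) n" "has_substring \<omega> s"
        using stage[of "st (max J k)" "max J k"] unfolding B_def by blast
      moreover have "k \<le> st (max J k)"
        using seq_suble[OF \<open>strict_mono st\<close>, of "max J k"] by simp
      moreover have "st (max J k) < n"
        using support[of "max J k" n] \<open>s \<in> B (max J k) n\<close> by blast
      ultimately show "\<exists>n\<ge>k. n \<in> {n. \<exists>s\<in>\<Union>j. B j n. has_substring \<omega> s}"
        by (intro exI[of _ n]) auto
    qed
  qed
  ultimately show ?thesis
    by blast
qed

theorem theorem4:
  fixes \<alpha> :: real and P :: "(nat \<Rightarrow> bool) measure"
  assumes "0 < \<alpha>" "\<alpha> < 1"
    and "prob_space P" and "sets P = sets (borel :: (nat \<Rightarrow> bool) measure)"
  shows "\<exists>A :: nat \<Rightarrow> bool list set.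
           (\<forall>n\<ge>1. A n \<subseteq> {s. length s = n} \<and> real (card (A n)) \<le> 2 powr (\<alpha> * real n)) \<and>
           (AE \<omega> in P. infinite {i. i \<ge> 1 \<and> (\<exists>s\<in>A i. has_substring \<omega> s)})"
proof -
  obtain A where A: "sparse_family \<alpha> A" "AE \<omega> in P. infinite {n. \<exists>s\<in>A n. has_substring \<omega> s}"
    using exists_sparse_family_hit_infinitely_often[OF assms(3) exists_sparse_stage[OF assms(3,4,1)]]
    by blast
  have "AE \<omega> in P. infinite {i. i \<ge> 1 \<and> (\<exists>s\<in>A i. has_substring \<omega> s)}"
  proof (rule eventually_mono[OF A(2)])
    fix \<omega> assume "infinite {n. \<exists>s\<in>A n. has_substring \<omega> s}"
    then have "infinite ({n. \<exists>s\<in>A n. has_substring \<omega> s} - {0})"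
      by (rule Diff_infinite_finite[rotated]) simp
    then show "infinite {i. i \<ge> 1 \<and> (\<exists>s\<in>A i. has_substring \<omega> s)}"
      by (rule infinite_super[rotated]) auto
  qed
  then show ?thesis
    using A(1) unfolding sparse_family_def by (intro exI[of _ A]) auto
qed

end
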